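(* Let $A$ be a monoid and let $\mathfrak{c}=(c_1,c_2,\dots)$ be an infinite sequence of integers with $c_i\ge2$ for all $i$. Then (1) the natural map $A^{\mathfrak{c}}\to(A_{\mathrm{red}})^{\mathfrak{c}}$ is an isomorphism; (2) if $A$ is pc, then the natural map $A^{\mathfrak{c}}\to(A_{\mathrm{sn}})^{\mathfrak{c}}$ is an isomorphism.
   Context: A monoid is a pointed commutative monoid. $A_{\mathrm{red}}$ is $A$ modulo the congruence $a\sim b$ iff $a^n=b^n$ for all $n\gg0$. pc: isomorphic to $C/I$ with $C$ cancellative ($ac=bc,c\ne0\Rightarrow a=b$) and $I$ an ideal. Seminormal: reduced ($a^2=b^2,a^3=b^3\Rightarrow a=b$) and $x^3=y^2\Rightarrow x=z^2,y=z^3$ for some $z$. For pc $A$, $A_{\mathrm{sn}}$ is its seminormalization: the map to a seminormal monoid with $A_{\mathrm{red}}\to A_{\mathrm{sn}}$ injective and every $b\in A_{\mathrm{sn}}$ satisfying $b^n\in A_{\mathrm{red}}$ for all $n\gg0$. For $c\ge2$, $\theta_c:A\to A$, $a\mapsto a^c$, is the dilation, and $A^{\mathfrak{c}}=\mathrm{colim}\{A\xrightarrow{\theta_{c_1}}A\xrightarrow{\theta_{c_2}}\cdots\}$, similarly for $A_{\mathrm{red}}$ and $A_{\mathrm{sn}}$. *)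

theory Defs
  imports "HOL-Algebra.Group"
begin

record 'a pmonoid = "'a monoid" + pzero :: 'a

definition pcmon :: "'a pmonoid \<Rightarrow> bool" where
  "pcmon M \<longleftrightarrow> comm_monoid M \<and> pzero M \<in> carrier M \<and>
     (\<forall>a\<in>carrier M. pzero M \<otimes>\<^bsub>M\<^esub> a = pzero M)"

definition pmon_hom :: "'a pmonoid \<Rightarrow> 'b pmonoid \<Rightarrow> ('a \<Rightarrow> 'b) \<Rightarrow> bool" where
  "pmon_hom M N f \<longleftrightarrow> f \<in> carrier M \<rightarrow> carrier N \<and>
     (\<forall>a\<in>carrier M. \<forall>b\<in>carrier M. f (a \<otimes>\<^bsub>M\<^esub> b) = f a \<otimes>\<^bsub>N\<^esub> f b) \<and>
     f \<one>\<^bsub>M\<^esub> = \<one>\<^bsub>N\<^esub> \<and> f (pzero M) = pzero N"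

definition pmon_iso :: "'a pmonoid \<Rightarrow> 'b pmonoid \<Rightarrow> ('a \<Rightarrow> 'b) \<Rightarrow> bool" where
  "pmon_iso M N f \<longleftrightarrow> pmon_hom M N f \<and> bij_betw f (carrier M) (carrier N)"

definition red_eq :: "'a pmonoid \<Rightarrow> 'a \<Rightarrow> 'a \<Rightarrow> bool" where
  "red_eq M a b \<longleftrightarrow> (\<exists>N. \<forall>n\<ge>N. a [^]\<^bsub>M\<^esub> (n::nat) = b [^]\<^bsub>M\<^esub> n)"

definition red_class :: "'a pmonoid \<Rightarrow> 'a \<Rightarrow> 'a set" where
  "red_class M a = {b \<in> carrier M. red_eq M a b}"

definition red :: "'a pmonoid \<Rightarrow> 'a set pmonoid" where
  "red M = \<lparr>carrier = red_class M ` carrier M,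
     mult = (\<lambda>X Y. red_class M ((SOME x. x \<in> X) \<otimes>\<^bsub>M\<^esub> (SOME y. y \<in> Y))),
     one = red_class M \<one>\<^bsub>M\<^esub>,
     pzero = red_class M (pzero M)\<rparr>"

definition red_map :: "'a pmonoid \<Rightarrow> 'a \<Rightarrow> 'a set" where
  "red_map M = red_class M"

text \<open>The sequence c = (c_1, c_2, ...) is indexed from 0: c 0 = c_1.  Stage i maps to
  stage i+1 by the dilation a \<mapsto> a^(c i); stage i maps to stage j \<ge> i by a \<mapsto> a^(dil_exp c i j).\<close>

definition dil_exp :: "(nat \<Rightarrow> nat) \<Rightarrow> nat \<Rightarrow> nat \<Rightarrow> nat" where
  "dil_exp c i j = (\<Prod>k\<in>{i..<j}. c k)"

definition colim_rel :: "'a pmonoid \<Rightarrow> (nat \<Rightarrow> nat) \<Rightarrow> nat \<times> 'a \<Rightarrow> nat \<times> 'a \<Rightarrow> bool" where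
  "colim_rel M c p q \<longleftrightarrow> (\<exists>k. fst p \<le> k \<and> fst q \<le> k \<and>
      snd p [^]\<^bsub>M\<^esub> dil_exp c (fst p) k = snd q [^]\<^bsub>M\<^esub> dil_exp c (fst q) k)"

definition colim_class :: "'a pmonoid \<Rightarrow> (nat \<Rightarrow> nat) \<Rightarrow> nat \<times> 'a \<Rightarrow> (nat \<times> 'a) set" where
  "colim_class M c p = {q. snd q \<in> carrier M \<and> colim_rel M c p q}"

definition colim :: "'a pmonoid \<Rightarrow> (nat \<Rightarrow> nat) \<Rightarrow> (nat \<times> 'a) set pmonoid" where
  "colim M c = \<lparr>carrier = {colim_class M c (i, a) | i a. a \<in> carrier M},
     mult = (\<lambda>X Y. let p = (SOME p. p \<in> X); q = (SOME q. q \<in> Y); k = max (fst p) (fst q) in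
               colim_class M c (k, snd p [^]\<^bsub>M\<^esub> dil_exp c (fst p) k
                                    \<otimes>\<^bsub>M\<^esub> snd q [^]\<^bsub>M\<^esub> dil_exp c (fst q) k)),
     one = colim_class M c (0, \<one>\<^bsub>M\<^esub>),
     pzero = colim_class M c (0, pzero M)\<rparr>"

text \<open>The map M^c \<rightarrow> N^c induced by a homomorphism f : M \<rightarrow> N (which commutes with dilations).\<close>
definition colim_map :: "'a pmonoid \<Rightarrow> 'b pmonoid \<Rightarrow> (nat \<Rightarrow> nat) \<Rightarrow> ('a \<Rightarrow> 'b)
    \<Rightarrow> (nat \<times> 'a) set \<Rightarrow> (nat \<times> 'b) set" where
  "colim_map M N c f X = (let p = (SOME p. p \<in> X) in colim_class N c (fst p, f (snd p)))"

definition cancellative :: "'a pmonoid \<Rightarrow> bool" where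
  "cancellative C \<longleftrightarrow> (\<forall>a\<in>carrier C. \<forall>b\<in>carrier C. \<forall>x\<in>carrier C.
      a \<otimes>\<^bsub>C\<^esub> x = b \<otimes>\<^bsub>C\<^esub> x \<and> x \<noteq> pzero C \<longrightarrow> a = b)"

definition pmon_ideal :: "'a set \<Rightarrow> 'a pmonoid \<Rightarrow> bool" where
  "pmon_ideal I C \<longleftrightarrow> I \<subseteq> carrier C \<and> pzero C \<in> I \<and>
      (\<forall>x\<in>I. \<forall>a\<in>carrier C. x \<otimes>\<^bsub>C\<^esub> a \<in> I)"

definition rees :: "'a pmonoid \<Rightarrow> 'a set \<Rightarrow> 'a pmonoid" where
  "rees C I = \<lparr>carrier = (carrier C - I) \<union> {pzero C},
     mult = (\<lambda>x y. if x \<otimes>\<^bsub>C\<^esub> y \<in> I then pzero C else x \<otimes>\<^bsub>C\<^esub> y),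
     one = (if \<one>\<^bsub>C\<^esub> \<in> I then pzero C else \<one>\<^bsub>C\<^esub>),
     pzero = pzero C\<rparr>"

text \<open>A is pc iff such data (C, I, g) exist.\<close>
definition pc_presentation :: "'a pmonoid \<Rightarrow> 'c pmonoid \<Rightarrow> 'c set \<Rightarrow> ('a \<Rightarrow> 'c) \<Rightarrow> bool" where
  "pc_presentation A C I g \<longleftrightarrow> pcmon C \<and> cancellative C \<and> pmon_ideal I C \<and> pmon_iso A (rees C I) g"

definition reduced_pm :: "'a pmonoid \<Rightarrow> bool" where
  "reduced_pm S \<longleftrightarrow> (\<forall>a\<in>carrier S. \<forall>b\<in>carrier S.
      a [^]\<^bsub>S\<^esub> (2::nat) = b [^]\<^bsub>S\<^esub> (2::nat) \<and> a [^]\<^bsub>S\<^esub> (3::nat) = b [^]\<^bsub>S\<^esub> (3::nat) \<longrightarrow> a = b)"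

definition seminormal :: "'a pmonoid \<Rightarrow> bool" where
  "seminormal S \<longleftrightarrow> reduced_pm S \<and> (\<forall>x\<in>carrier S. \<forall>y\<in>carrier S.
      x [^]\<^bsub>S\<^esub> (3::nat) = y [^]\<^bsub>S\<^esub> (2::nat) \<longrightarrow>
      (\<exists>z\<in>carrier S. x = z [^]\<^bsub>S\<^esub> (2::nat) \<and> y = z [^]\<^bsub>S\<^esub> (3::nat)))"

text \<open>f : A \<rightarrow> S is a seminormalization of A: S seminormal, the induced map A_red \<rightarrow> S
  is well defined and injective, and every b in S has b^n in the image for all n \<gg> 0.\<close>
definition is_seminormalization :: "'a pmonoid \<Rightarrow> 's pmonoid \<Rightarrow> ('a \<Rightarrow> 's) \<Rightarrow> bool" where
  "is_seminormalization A S f \<longleftrightarrow> pcmon S \<and> seminormal S \<and> pmon_hom A S f \<and>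
     (\<forall>a\<in>carrier A. \<forall>b\<in>carrier A. f a = f b \<longleftrightarrow> red_eq A a b) \<and>
     (\<forall>b\<in>carrier S. \<exists>N. \<forall>n\<ge>N. b [^]\<^bsub>S\<^esub> (n::nat) \<in> f ` carrier A)"

end

theory Submission
  imports Defs
begin

text \<open>Both A \<rightarrow> A_red and A \<rightarrow> A_sn are homomorphisms f that identify a and b only if
  a^n = b^n for n \<gg> 0, and such that every element of the target has all large powers in
  the image. Any such f induces an isomorphism of dilation colimits: the exponent
  c_i \<cdots> c_(k-1) relating stage i to stage k is at least 2^(k-i), so passing to a late enough
  stage turns "for all large n" into an actual equality, resp. an actual preimage.\<close>

lemma dil_exp_refl [simp]: "dil_exp c i i = 1"
  unfolding dil_exp_def by simp

lemma dil_exp_trans: "i \<le> j \<Longrightarrow> j \<le> k \<Longrightarrow> dil_exp c i j * dil_exp c j k = dil_exp c i k"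
  unfolding dil_exp_def by (simp add: prod.atLeastLessThan_concat)

lemma dil_exp_Suc: "i \<le> j \<Longrightarrow> dil_exp c i (Suc j) = dil_exp c i j * c j"
  unfolding dil_exp_def by (simp add: prod.atLeastLessThan_Suc)

lemma dil_exp_ge_power2:
  assumes "\<forall>k. 2 \<le> c k" shows "2 ^ n \<le> dil_exp c i (i + n)"
proof (induction n)
  case (Suc n)
  then show ?case
    using assms mult_le_mono[OF Suc.IH, of 2 "c (i + n)"] by (simp add: dil_exp_Suc mult.commute)
qed simp

lemma dil_exp_ge:
  assumes "\<forall>k. 2 \<le> c k" shows "n \<le> dil_exp c i (i + n)"
  using dil_exp_ge_power2[OF assms, of n i] less_exp[of n] by linarith

lemma nat_pow_dil_exp_trans:
  assumes "monoid M" "x \<in> carrier M" "i \<le> j" "j \<le> k"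
  shows "(x [^]\<^bsub>M\<^esub> dil_exp c i j) [^]\<^bsub>M\<^esub> dil_exp c j k = x [^]\<^bsub>M\<^esub> dil_exp c i k"
  using assms by (simp add: monoid.nat_pow_pow dil_exp_trans)

lemma colim_rel_iff_eventually:
  assumes "monoid M" "a \<in> carrier M" "b \<in> carrier M"
  shows "colim_rel M c (i, a) (j, b) \<longleftrightarrow>
    (\<forall>\<^sub>F k in sequentially. a [^]\<^bsub>M\<^esub> dil_exp c i k = b [^]\<^bsub>M\<^esub> dil_exp c j k)"
proof
  assume "colim_rel M c (i, a) (j, b)"
  then obtain k where k: "i \<le> k" "j \<le> k" "a [^]\<^bsub>M\<^esub> dil_exp c i k = b [^]\<^bsub>M\<^esub> dil_exp c j k"
    unfolding colim_rel_def by auto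
  have "a [^]\<^bsub>M\<^esub> dil_exp c i K = b [^]\<^bsub>M\<^esub> dil_exp c j K" if "k \<le> K" for K
    using nat_pow_dil_exp_trans[OF assms(1,2) k(1) that, of c]
      nat_pow_dil_exp_trans[OF assms(1,3) k(2) that, of c] k(3) by simp
  then show "\<forall>\<^sub>F k in sequentially. a [^]\<^bsub>M\<^esub> dil_exp c i k = b [^]\<^bsub>M\<^esub> dil_exp c j k"
    by (auto simp: eventually_sequentially)
next
  assume "\<forall>\<^sub>F k in sequentially. a [^]\<^bsub>M\<^esub> dil_exp c i k = b [^]\<^bsub>M\<^esub> dil_exp c j k"
  then have "\<forall>\<^sub>F k in sequentially. i \<le> k \<and> j \<le> k \<and> a [^]\<^bsub>M\<^esub> dil_exp c i k = b [^]\<^bsub>M\<^esub> dil_exp c j k"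
    by (intro eventually_conj eventually_ge_at_top)
  then show "colim_rel M c (i, a) (j, b)"
    unfolding colim_rel_def eventually_sequentially by auto
qed

lemma colim_class_eq_iff:
  assumes "monoid M" "a \<in> carrier M" "b \<in> carrier M"
  shows "colim_class M c (i, a) = colim_class M c (j, b) \<longleftrightarrow> colim_rel M c (i, a) (j, b)"
proof -
  let ?ev = "\<lambda>i a j b. \<forall>\<^sub>F k in sequentially. a [^]\<^bsub>M\<^esub> dil_exp c i k = b [^]\<^bsub>M\<^esub> dil_exp c j k"
  have self: "(j, b) \<in> colim_class M c (j, b)"
    using assms(3) unfolding colim_class_def colim_rel_def by auto
  have "colim_class M c (i, a) = colim_class M c (j, b)" if "?ev i a j b"
  proof -
    have "?ev i a l x \<longleftrightarrow> ?ev j b l x" for l x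
      using that by (auto elim: eventually_elim2)
    then show ?thesis
      unfolding colim_class_def using colim_rel_iff_eventually[OF assms(1,2)]
        colim_rel_iff_eventually[OF assms(1,3)] by auto
  qed
  then show ?thesis
    using self colim_rel_iff_eventually[OF assms] unfolding colim_class_def by blast
qed

lemma colim_class_self: "a \<in> carrier M \<Longrightarrow> (i, a) \<in> colim_class M c (i, a)"
  unfolding colim_class_def colim_rel_def by auto

lemma colim_class_member:
  assumes "monoid M" "a \<in> carrier M" "p \<in> colim_class M c (i, a)"
  shows "snd p \<in> carrier M" "colim_class M c p = colim_class M c (i, a)"
proof -
  obtain l x where p: "p = (l, x)" by fastforce
  show x: "snd p \<in> carrier M" using assms(3) unfolding colim_class_def by auto
  have "colim_rel M c (l, x) (i, a)"
    using assms(3) unfolding colim_class_def colim_rel_def p by auto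
  then show "colim_class M c p = colim_class M c (i, a)"
    using colim_class_eq_iff[OF assms(1) _ assms(2)] x p by simp
qed

lemma colim_class_some:
  assumes "monoid M" "a \<in> carrier M"
  obtains l x where "(SOME p. p \<in> colim_class M c (i, a)) = (l, x)" "x \<in> carrier M"
    "colim_class M c (l, x) = colim_class M c (i, a)"
proof -
  have "(SOME p. p \<in> colim_class M c (i, a)) \<in> colim_class M c (i, a)"
    by (rule someI[of _ "(i, a)"]) (rule colim_class_self[OF assms(2)])
  from colim_class_member[OF assms this] that show ?thesis by (metis prod.collapse)
qed

lemma colim_class_shift:
  assumes "monoid M" "a \<in> carrier M" "i \<le> k"
  shows "colim_class M c (k, a [^]\<^bsub>M\<^esub> dil_exp c i k) = colim_class M c (i, a)"
proof -
  have "colim_rel M c (k, a [^]\<^bsub>M\<^esub> dil_exp c i k) (i, a)"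
    unfolding colim_rel_def using assms by (intro exI[of _ k]) (simp add: monoid.nat_pow_closed monoid.r_one)
  then show ?thesis
    using colim_class_eq_iff[OF assms(1) monoid.nat_pow_closed[OF assms(1,2)] assms(2)] by simp
qed

lemma colim_carrier:
  "carrier (colim M c) = {colim_class M c (i, a) | i a. a \<in> carrier M}"
  by (simp add: colim_def)

lemma nat_pow_dil_exp_mult:
  assumes "comm_monoid M" "x \<in> carrier M" "y \<in> carrier M" "l \<le> k" "l' \<le> k" "k \<le> K"
  shows "(x [^]\<^bsub>M\<^esub> dil_exp c l k \<otimes>\<^bsub>M\<^esub> y [^]\<^bsub>M\<^esub> dil_exp c l' k) [^]\<^bsub>M\<^esub> dil_exp c k K
    = x [^]\<^bsub>M\<^esub> dil_exp c l K \<otimes>\<^bsub>M\<^esub> y [^]\<^bsub>M\<^esub> dil_exp c l' K"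
proof -
  interpret comm_monoid M by fact
  show ?thesis
    using assms nat_pow_dil_exp_trans[OF monoid_axioms] by (simp add: nat_pow_distrib)
qed

lemma colim_mult_class:
  assumes cm: "comm_monoid M" and a: "a \<in> carrier M" and b: "b \<in> carrier M"
    and "i \<le> m" "j \<le> m"
  shows "colim_class M c (i, a) \<otimes>\<^bsub>colim M c\<^esub> colim_class M c (j, b)
    = colim_class M c (m, a [^]\<^bsub>M\<^esub> dil_exp c i m \<otimes>\<^bsub>M\<^esub> b [^]\<^bsub>M\<^esub> dil_exp c j m)"
proof -
  interpret comm_monoid M by fact
  note [simp] = nat_pow_closed
  obtain l x where p: "(SOME p. p \<in> colim_class M c (i, a)) = (l, x)" "x \<in> carrier M"
    "colim_class M c (l, x) = colim_class M c (i, a)"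
    using colim_class_some[OF monoid_axioms a] by blast
  obtain l' y where q: "(SOME p. p \<in> colim_class M c (j, b)) = (l', y)" "y \<in> carrier M"
    "colim_class M c (l', y) = colim_class M c (j, b)"
    using colim_class_some[OF monoid_axioms b] by blast
  define k where "k = max l l'"
  let ?pow = "\<lambda>z s K. z [^]\<^bsub>M\<^esub> dil_exp c s K"
  have "\<forall>\<^sub>F K in sequentially. ?pow x l K = ?pow a i K" "\<forall>\<^sub>F K in sequentially. ?pow y l' K = ?pow b j K"
    using p q a b colim_class_eq_iff[OF monoid_axioms] colim_rel_iff_eventually[OF monoid_axioms] by auto
  moreover have "\<forall>\<^sub>F K in sequentially. K \<ge> k" "\<forall>\<^sub>F K in sequentially. K \<ge> m"
    by (rule eventually_ge_at_top)+
  ultimately have "\<forall>\<^sub>F K in sequentially. ?pow (?pow x l k \<otimes>\<^bsub>M\<^esub> ?pow y l' k) k K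
      = ?pow (?pow a i m \<otimes>\<^bsub>M\<^esub> ?pow b j m) m K"
    by eventually_elim (use assms p q in \<open>simp add: nat_pow_dil_exp_mult k_def\<close>)
  then have "colim_class M c (k, ?pow x l k \<otimes>\<^bsub>M\<^esub> ?pow y l' k)
      = colim_class M c (m, ?pow a i m \<otimes>\<^bsub>M\<^esub> ?pow b j m)"
    using a b p q colim_class_eq_iff[OF monoid_axioms] colim_rel_iff_eventually[OF monoid_axioms] by simp
  then show ?thesis by (simp add: colim_def Let_def p(1) q(1) k_def)
qed

lemma pmon_hom_nat_pow:
  assumes "monoid M" "pmon_hom M N f" "x \<in> carrier M"
  shows "f (x [^]\<^bsub>M\<^esub> (n::nat)) = f x [^]\<^bsub>N\<^esub> n"
  using assms by (induction n) (auto simp: pmon_hom_def monoid.nat_pow_closed)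

lemma colim_map_class:
  assumes "monoid M" "monoid N" "pmon_hom M N f" "a \<in> carrier M"
  shows "colim_map M N c f (colim_class M c (i, a)) = colim_class N c (i, f a)"
proof -
  obtain l x where p: "(SOME p. p \<in> colim_class M c (i, a)) = (l, x)" "x \<in> carrier M"
    "colim_class M c (l, x) = colim_class M c (i, a)"
    using colim_class_some[OF assms(1,4)] by blast
  then obtain k where k: "l \<le> k" "i \<le> k" "x [^]\<^bsub>M\<^esub> dil_exp c l k = a [^]\<^bsub>M\<^esub> dil_exp c i k"
    using colim_class_eq_iff[OF assms(1) p(2) assms(4)] unfolding colim_rel_def by auto
  then have "f x [^]\<^bsub>N\<^esub> dil_exp c l k = f a [^]\<^bsub>N\<^esub> dil_exp c i k"
    using pmon_hom_nat_pow[OF assms(1,3)] p(2) assms(4) by metis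
  then have "colim_rel N c (l, f x) (i, f a)"
    unfolding colim_rel_def using k by auto
  moreover have "f x \<in> carrier N" "f a \<in> carrier N"
    using assms(3,4) p(2) unfolding pmon_hom_def by auto
  ultimately show ?thesis
    unfolding colim_map_def Let_def p(1) using colim_class_eq_iff[OF assms(2)] by simp
qed

lemma colim_map_pmon_hom:
  assumes CM: "comm_monoid M" and CN: "comm_monoid N" and "pzero M \<in> carrier M"
    and hom: "pmon_hom M N f"
  shows "pmon_hom (colim M c) (colim N c) (colim_map M N c f)"
proof -
  interpret M: comm_monoid M by fact
  interpret N: comm_monoid N by fact
  have fc: "\<And>a. a \<in> carrier M \<Longrightarrow> f a \<in> carrier N"
    using hom unfolding pmon_hom_def by auto
  note map_class = colim_map_class[OF M.monoid_axioms N.monoid_axioms hom]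
  have "colim_map M N c f (X \<otimes>\<^bsub>colim M c\<^esub> Y) = colim_map M N c f X \<otimes>\<^bsub>colim N c\<^esub> colim_map M N c f Y"
    if XY: "X \<in> carrier (colim M c)" "Y \<in> carrier (colim M c)" for X Y
  proof -
    obtain i a j b where X: "X = colim_class M c (i, a)" "a \<in> carrier M"
      and Y: "Y = colim_class M c (j, b)" "b \<in> carrier M"
      using XY unfolding colim_carrier by blast
    have m: "i \<le> max i j" "j \<le> max i j" by auto
    show ?thesis
      using X Y hom by (simp add: colim_mult_class[OF CM _ _ m] colim_mult_class[OF CN fc fc m]
          map_class pmon_hom_def pmon_hom_nat_pow[OF M.monoid_axioms hom])
  qed
  moreover have "colim_map M N c f \<in> carrier (colim M c) \<rightarrow> carrier (colim N c)"
    using map_class fc by (fastforce simp: colim_carrier)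
  ultimately show ?thesis
    using map_class[OF M.one_closed] map_class[OF assms(3)] hom
    unfolding pmon_hom_def by (simp add: colim_def)
qed

lemma colim_map_inj_on:
  assumes mM: "monoid M" and mN: "monoid N" and hom: "pmon_hom M N f"
    and ker: "\<forall>a\<in>carrier M. \<forall>b\<in>carrier M. f a = f b \<longrightarrow> red_eq M a b"
    and c: "\<forall>k. 2 \<le> c k"
  shows "inj_on (colim_map M N c f) (carrier (colim M c))"
proof (rule inj_onI)
  fix X Y assume XY: "X \<in> carrier (colim M c)" "Y \<in> carrier (colim M c)"
    and eq: "colim_map M N c f X = colim_map M N c f Y"
  then obtain i a j b where X: "X = colim_class M c (i, a)" "a \<in> carrier M"
    and Y: "Y = colim_class M c (j, b)" "b \<in> carrier M"
    unfolding colim_carrier by blast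
  have fc: "f a \<in> carrier N" "f b \<in> carrier N"
    using hom X(2) Y(2) unfolding pmon_hom_def by auto
  have "colim_class N c (i, f a) = colim_class N c (j, f b)"
    using eq X Y colim_map_class[OF mM mN hom] by simp
  then obtain k where k: "i \<le> k" "j \<le> k" "f a [^]\<^bsub>N\<^esub> dil_exp c i k = f b [^]\<^bsub>N\<^esub> dil_exp c j k"
    using colim_class_eq_iff[OF mN fc] unfolding colim_rel_def by auto
  then have "red_eq M (a [^]\<^bsub>M\<^esub> dil_exp c i k) (b [^]\<^bsub>M\<^esub> dil_exp c j k)"
    using ker X(2) Y(2) pmon_hom_nat_pow[OF mM hom] by (simp add: monoid.nat_pow_closed[OF mM])
  then obtain n where n: "\<forall>m\<ge>n. (a [^]\<^bsub>M\<^esub> dil_exp c i k) [^]\<^bsub>M\<^esub> m = (b [^]\<^bsub>M\<^esub> dil_exp c j k) [^]\<^bsub>M\<^esub> (m::nat)"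
    unfolding red_eq_def by blast
  have "a [^]\<^bsub>M\<^esub> dil_exp c i (k + n) = b [^]\<^bsub>M\<^esub> dil_exp c j (k + n)"
    using n[rule_format, OF dil_exp_ge[OF c, of n k]] k(1,2) X(2) Y(2)
    by (simp add: nat_pow_dil_exp_trans[OF mM])
  then have "colim_rel M c (i, a) (j, b)"
    unfolding colim_rel_def using k by (intro exI[of _ "k + n"]) simp
  then show "X = Y"
    using X Y colim_class_eq_iff[OF mM X(2) Y(2)] by simp
qed

lemma colim_map_image:
  assumes mM: "monoid M" and mN: "monoid N" and hom: "pmon_hom M N f"
    and pow_surj: "\<forall>y\<in>carrier N. \<exists>n. \<forall>m\<ge>n. y [^]\<^bsub>N\<^esub> (m::nat) \<in> f ` carrier M"
    and c: "\<forall>k. 2 \<le> c k"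
  shows "colim_map M N c f ` carrier (colim M c) = carrier (colim N c)"
proof
  show "colim_map M N c f ` carrier (colim M c) \<subseteq> carrier (colim N c)"
    using colim_map_class[OF mM mN hom] hom unfolding pmon_hom_def colim_carrier by fastforce
next
  show "carrier (colim N c) \<subseteq> colim_map M N c f ` carrier (colim M c)"
  proof
    fix Y assume "Y \<in> carrier (colim N c)"
    then obtain i y where Y: "Y = colim_class N c (i, y)" "y \<in> carrier N"
      unfolding colim_carrier by blast
    obtain n where "\<forall>m\<ge>n. y [^]\<^bsub>N\<^esub> (m::nat) \<in> f ` carrier M"
      using pow_surj Y(2) by blast
    then obtain a where a: "a \<in> carrier M" "y [^]\<^bsub>N\<^esub> dil_exp c i (i + n) = f a"
      using dil_exp_ge[OF c, of n i] by blast
    have "Y = colim_class N c (i + n, f a)"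
      using colim_class_shift[OF mN Y(2), of i "i + n" c] a(2) Y(1) by simp
    also have "\<dots> = colim_map M N c f (colim_class M c (i + n, a))"
      using colim_map_class[OF mM mN hom a(1)] by simp
    finally show "Y \<in> colim_map M N c f ` carrier (colim M c)"
      using a(1) unfolding colim_carrier by blast
  qed
qed

lemma colim_map_pmon_iso:
  assumes "comm_monoid M" "comm_monoid N" "pzero M \<in> carrier M" "pmon_hom M N f"
    and "\<forall>a\<in>carrier M. \<forall>b\<in>carrier M. f a = f b \<longrightarrow> red_eq M a b"
    and "\<forall>y\<in>carrier N. \<exists>n. \<forall>m\<ge>n. y [^]\<^bsub>N\<^esub> (m::nat) \<in> f ` carrier M"
    and "\<forall>k. 2 \<le> c k"
  shows "pmon_iso (colim M c) (colim N c) (colim_map M N c f)"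
  using assms comm_monoid.axioms(1)[OF assms(1)] comm_monoid.axioms(1)[OF assms(2)]
  unfolding pmon_iso_def bij_betw_def
  by (simp add: colim_map_pmon_hom colim_map_inj_on colim_map_image)

lemma red_eq_iff_eventually:
  "red_eq M a b \<longleftrightarrow> (\<forall>\<^sub>F n in sequentially. a [^]\<^bsub>M\<^esub> (n::nat) = b [^]\<^bsub>M\<^esub> n)"
  unfolding red_eq_def eventually_sequentially by simp

lemma red_class_eq_iff:
  assumes "b \<in> carrier M"
  shows "red_class M a = red_class M b \<longleftrightarrow> red_eq M a b"
proof
  assume "red_class M a = red_class M b"
  moreover have "b \<in> red_class M b"
    using assms unfolding red_class_def red_eq_def by auto
  ultimately show "red_eq M a b" unfolding red_class_def by auto
next
  assume "red_eq M a b"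
  then have "red_eq M a x \<longleftrightarrow> red_eq M b x" for x
    unfolding red_eq_iff_eventually by (auto elim: eventually_elim2)
  then show "red_class M a = red_class M b" unfolding red_class_def by simp
qed

lemma red_class_some:
  assumes "a \<in> carrier M"
  shows "(SOME x. x \<in> red_class M a) \<in> carrier M"
    "red_class M (SOME x. x \<in> red_class M a) = red_class M a"
proof -
  have "(SOME x. x \<in> red_class M a) \<in> red_class M a"
    by (rule someI[of _ a]) (use assms in \<open>simp add: red_class_def red_eq_def\<close>)
  then show "(SOME x. x \<in> red_class M a) \<in> carrier M"
    "red_class M (SOME x. x \<in> red_class M a) = red_class M a"
    using red_class_eq_iff[of _ M] unfolding red_class_def by auto
qed

lemma red_mult_class:
  assumes "comm_monoid M" "a \<in> carrier M" "b \<in> carrier M"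
  shows "red_class M a \<otimes>\<^bsub>red M\<^esub> red_class M b = red_class M (a \<otimes>\<^bsub>M\<^esub> b)"
proof -
  interpret comm_monoid M by fact
  define x where "x = (SOME x. x \<in> red_class M a)"
  define y where "y = (SOME y. y \<in> red_class M b)"
  have x: "x \<in> carrier M" "red_eq M x a"
    using red_class_some[OF assms(2)] red_class_eq_iff[OF assms(2), of x] x_def by auto
  have y: "y \<in> carrier M" "red_eq M y b"
    using red_class_some[OF assms(3)] red_class_eq_iff[OF assms(3), of y] y_def by auto
  have "red_eq M (x \<otimes>\<^bsub>M\<^esub> y) (a \<otimes>\<^bsub>M\<^esub> b)"
    using x(2) y(2) unfolding red_eq_iff_eventually
    by (auto elim: eventually_elim2 simp: nat_pow_distrib assms x(1) y(1))
  then show ?thesis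
    using red_class_eq_iff[of "a \<otimes>\<^bsub>M\<^esub> b" M] assms
    unfolding red_def x_def y_def by simp
qed

lemma red_carrier: "carrier (red M) = red_class M ` carrier M"
  by (simp add: red_def)

lemma comm_monoid_red:
  assumes cm: "comm_monoid M"
  shows "comm_monoid (red M)"
proof -
  interpret comm_monoid M by fact
  have one: "\<one>\<^bsub>red M\<^esub> = red_class M \<one>\<^bsub>M\<^esub>" by (simp add: red_def)
  note mult = red_mult_class[OF cm]
  show ?thesis
  proof (rule comm_monoidI)
    fix X Y Z assume "X \<in> carrier (red M)" "Y \<in> carrier (red M)" "Z \<in> carrier (red M)"
    then obtain a b d where "a \<in> carrier M" "b \<in> carrier M" "d \<in> carrier M"
      and "X = red_class M a" "Y = red_class M b" "Z = red_class M d"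
      unfolding red_carrier by blast
    then show "X \<otimes>\<^bsub>red M\<^esub> Y \<in> carrier (red M)"
      "X \<otimes>\<^bsub>red M\<^esub> Y \<otimes>\<^bsub>red M\<^esub> Z = X \<otimes>\<^bsub>red M\<^esub> (Y \<otimes>\<^bsub>red M\<^esub> Z)"
      "\<one>\<^bsub>red M\<^esub> \<otimes>\<^bsub>red M\<^esub> X = X" "X \<otimes>\<^bsub>red M\<^esub> Y = Y \<otimes>\<^bsub>red M\<^esub> X"
      by (simp_all add: red_carrier one mult m_ac)
  qed (simp add: red_carrier one)
qed

lemma red_nat_pow_class:
  assumes "comm_monoid M" "a \<in> carrier M"
  shows "red_class M a [^]\<^bsub>red M\<^esub> (n::nat) = red_class M (a [^]\<^bsub>M\<^esub> n)"
proof -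
  interpret comm_monoid M by fact
  show ?thesis
    by (induction n) (simp_all add: red_def[of M, THEN arg_cong[where f = one]]
        red_mult_class[OF assms(1)] assms(2))
qed

lemma pmon_hom_red_map:
  assumes "comm_monoid M"
  shows "pmon_hom M (red M) (red_map M)"
  using red_mult_class[OF assms] unfolding pmon_hom_def red_map_def
  by (auto simp: red_carrier red_def)

theorem lemma3p5:
  fixes A :: "'a pmonoid" and c :: "nat \<Rightarrow> nat"
  assumes "pcmon A" and "\<forall>i. 2 \<le> c i"
  shows "pmon_iso (colim A c) (colim (red A) c) (colim_map A (red A) c (red_map A)) \<and>
    (\<forall>C I g S f. pc_presentation A (C :: 'c pmonoid) I g \<and>
        is_seminormalization A (S :: 's pmonoid) f \<longrightarrow>
        pmon_iso (colim A c) (colim S c) (colim_map A S c f))"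
proof -
  have cm: "comm_monoid A" and zero: "pzero A \<in> carrier A"
    using assms(1) unfolding pcmon_def by auto
  have "\<forall>y\<in>carrier (red A). \<forall>n. y [^]\<^bsub>red A\<^esub> (n::nat) \<in> red_map A ` carrier A"
    using red_nat_pow_class[OF cm] monoid.nat_pow_closed[OF comm_monoid.axioms(1)[OF cm]]
    unfolding red_carrier red_map_def by auto
  then have "pmon_iso (colim A c) (colim (red A) c) (colim_map A (red A) c (red_map A))"
    using red_class_eq_iff[of _ A] assms(2)
    by (intro colim_map_pmon_iso[OF cm comm_monoid_red[OF cm] zero pmon_hom_red_map[OF cm]])
      (auto simp: red_map_def)
  \<comment> \<open>The pc hypothesis only guarantees that a seminormalization exists.\<close>
  moreover have "pmon_iso (colim A c) (colim S c) (colim_map A S c f)"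
    if "is_seminormalization A S f" for S :: "'s pmonoid" and f
    using that cm zero assms(2) unfolding is_seminormalization_def pcmon_def
    by (intro colim_map_pmon_iso) auto
  ultimately show ?thesis by blast
qed

end
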